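(* Let $(A,f)$ be a finite-dimensional abelian quadratic Lie algebra over a field $\mathbb{K}$ of characteristic zero, let $d$ be an $f$-skew-symmetric derivation of $A$, and let $(A_b,f_b)$ be the one-dimensional double extension of $(A,f)$ by $(b,d)$. Then $A_b$ is $2$-step nilpotent if and only if $d\neq 0$ and $d^2=0$.
   Context: A quadratic Lie algebra $(A,f)$ is a Lie algebra with a non-degenerate symmetric invariant bilinear form $f$ (invariance: $f([x,y],z)+f(y,[x,z])=0$); here $A$ is abelian so every linear map is a derivation. A linear map $d$ is $f$-skew-symmetric if $f(d(x),y)+f(x,d(y))=0$. The one-dimensional double extension of $(A,f)$ by $(b,d)$ is $A_b=\mathbb{K}b\oplus A\oplus\mathbb{K}\beta$ with bracket $[\lambda b+a+\mu\beta,\lambda' b+a'+\mu'\beta]=\lambda d(a')-\lambda' d(a)+[a,a']_A+f(d(a),a')\beta$ and form $f_b(\lambda b+a+\mu\beta,\lambda' b+a'+\mu'\beta)=\lambda\mu'+\lambda'\mu+f(a,a')$. $2$-step nilpotent means $[L,[L,L]]=0\neq[L,L]$. *)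

theory Defs
  imports Complex_Main "HOL-Library.Product_Plus"
begin

text \<open>The one-dimensional double extension A_b = K b + A + K beta of an abelian
 quadratic Lie algebra (A,f) by (b,d). Elements lambda b + a + mu beta are
 represented as triples (lambda, a, mu).\<close>

definition dext_scale :: "('k::field \<Rightarrow> 'v \<Rightarrow> 'v) \<Rightarrow> 'k \<Rightarrow> 'k \<times> 'v \<times> 'k \<Rightarrow> 'k \<times> 'v \<times> 'k"
  where "dext_scale scale c x = (case x of (l, a, m) \<Rightarrow> (c * l, scale c a, c * m))"

text \<open>Bracket of A_b; the bracket of A is zero since A is abelian.\<close>
definition dext_bracket ::
  "('k::field \<Rightarrow> 'v::ab_group_add \<Rightarrow> 'v) \<Rightarrow> ('v \<Rightarrow> 'v \<Rightarrow> 'k) \<Rightarrow> ('v \<Rightarrow> 'v)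
   \<Rightarrow> 'k \<times> 'v \<times> 'k \<Rightarrow> 'k \<times> 'v \<times> 'k \<Rightarrow> 'k \<times> 'v \<times> 'k"
  where "dext_bracket scale f d x y =
    (case x of (l, a, m) \<Rightarrow> case y of (l', a', m') \<Rightarrow>
      (0, scale l (d a') - scale l' (d a), f (d a) a'))"

definition dext_comm ::
  "('k::field \<Rightarrow> 'v::ab_group_add \<Rightarrow> 'v) \<Rightarrow> ('v \<Rightarrow> 'v \<Rightarrow> 'k) \<Rightarrow> ('v \<Rightarrow> 'v)
   \<Rightarrow> ('k \<times> 'v \<times> 'k) set \<Rightarrow> ('k \<times> 'v \<times> 'k) set \<Rightarrow> ('k \<times> 'v \<times> 'k) set"
  where "dext_comm scale f d S T =
    module.span (dext_scale scale) {dext_bracket scale f d x y | x y. x \<in> S \<and> y \<in> T}"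

definition dext_two_step_nilpotent ::
  "('k::field \<Rightarrow> 'v::ab_group_add \<Rightarrow> 'v) \<Rightarrow> ('v \<Rightarrow> 'v \<Rightarrow> 'k) \<Rightarrow> ('v \<Rightarrow> 'v) \<Rightarrow> bool"
  where "dext_two_step_nilpotent scale f d \<longleftrightarrow>
    dext_comm scale f d UNIV (dext_comm scale f d UNIV UNIV) = {(0, 0, 0)}
    \<and> dext_comm scale f d UNIV UNIV \<noteq> {(0, 0, 0)}"

end

theory Submission
  imports Defs
begin

text \<open>Bracketing with \<open>b\<close> is \<open>d\<close>, so \<open>[L,L]\<close> contains \<open>d(A)\<close> and \<open>[L,[L,L]]\<close> contains
  \<open>d\<^sup>2(A)\<close>; conversely every bracket lies in \<open>d(A)\<close> plus the line of \<open>\<beta>\<close>, which is central once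
  \<open>d\<^sup>2 = 0\<close> by skew-symmetry of \<open>d\<close>.\<close>

lemma (in module) span_eq_zero_iff: "span S = {0} \<longleftrightarrow> S \<subseteq> {0}"
  using span_base span_minimal[of S "{0}"] span_zero by auto

lemma module_dext_scale:
  assumes "vector_space scale"
  shows "module (dext_scale scale)"
proof -
  interpret vector_space scale by fact
  show ?thesis
    by unfold_locales
      (auto simp: dext_scale_def algebra_simps scale_right_distrib scale_left_distrib split: prod.splits)
qed

locale skew_derivation = vector_space scale
  for scale :: "'k::field \<Rightarrow> 'v::ab_group_add \<Rightarrow> 'v" +
  fixes f :: "'v \<Rightarrow> 'v \<Rightarrow> 'k" and d :: "'v \<Rightarrow> 'v"
  assumes f_linear: "Vector_Spaces.linear scale (*) (f x)"
    and f_sym: "f x y = f y x"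
    and d_linear: "Vector_Spaces.linear scale scale d"
    and d_skew: "f (d x) y + f x (d y) = 0"
begin

sublocale dext: module "dext_scale scale"
  by (rule module_dext_scale) unfold_locales

sublocale d: Vector_Spaces.linear scale scale d
  by (rule d_linear)

abbreviation derived :: "('k \<times> 'v \<times> 'k) set"
  where "derived \<equiv> dext_comm scale f d UNIV UNIV"

lemma f_zero_right [simp]: "f x 0 = 0"
proof -
  interpret Vector_Spaces.linear scale "(*)" "f x" by (rule f_linear)
  show ?thesis by (rule zero)
qed

lemma f_zero_left [simp]: "f 0 y = 0"
  using f_zero_right f_sym by metis

lemma f_image_kernel: "d y = 0 \<Longrightarrow> f (d x) y = 0"
  using d_skew[of x y] by simp

lemma dext_comm_eq_zero_iff:
  "dext_comm scale f d S T = {0} \<longleftrightarrow> (\<forall>x\<in>S. \<forall>y\<in>T. dext_bracket scale f d x y = 0)"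
  unfolding dext_comm_def dext.span_eq_zero_iff by blast

lemma dext_bracket_b_left: "dext_bracket scale f d (1, 0, 0) (0, v, 0) = (0, d v, 0)"
  by (simp add: dext_bracket_def)

lemma d_in_derived: "(0, d v, 0) \<in> derived"
  unfolding dext_comm_def
  by (rule dext.span_base) (use dext_bracket_b_left[symmetric] in blast)

lemma derived_eq_zero_iff: "derived = {0} \<longleftrightarrow> d = (\<lambda>_. 0)"
proof
  assume "derived = {0}"
  then show "d = (\<lambda>_. 0)"
    using d_in_derived by (auto simp: zero_prod_def)
next
  assume "d = (\<lambda>_. 0)"
  then show "derived = {0}"
    unfolding dext_comm_eq_zero_iff by (simp add: dext_bracket_def zero_prod_def split: prod.splits)
qed

lemma second_derived_eq_zero_iff: "dext_comm scale f d UNIV derived = {0} \<longleftrightarrow> d \<circ> d = (\<lambda>_. 0)"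
proof
  assume "dext_comm scale f d UNIV derived = {0}"
  then have "dext_bracket scale f d (1, 0, 0) (0, d v, 0) = 0" for v
    using d_in_derived by (auto simp: dext_comm_eq_zero_iff)
  then show "d \<circ> d = (\<lambda>_. 0)"
    by (auto simp: dext_bracket_b_left zero_prod_def)
next
  assume dd: "d \<circ> d = (\<lambda>_. 0)"
  define K :: "('k \<times> 'v \<times> 'k) set" where "K = {(0, a, m) | a m. d a = 0}"
  have "dext.subspace K"
    by (force simp: dext.subspace_def K_def zero_prod_def dext_scale_def d.add d.scale)
  moreover have "dext_bracket scale f d x y \<in> K" for x y
    using dd by (auto simp: K_def dext_bracket_def d.diff d.scale fun_eq_iff split: prod.splits)
  ultimately have "derived \<subseteq> K"
    unfolding dext_comm_def by (intro dext.span_minimal) auto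
  moreover have "dext_bracket scale f d x y = 0" if "y \<in> K" for x y
    using that by (auto simp: f_image_kernel K_def dext_bracket_def zero_prod_def split: prod.splits)
  ultimately show "dext_comm scale f d UNIV derived = {0}"
    by (auto simp: dext_comm_eq_zero_iff)
qed

end

theorem corollary2p11:
  fixes scale :: "'k::field_char_0 \<Rightarrow> 'v::ab_group_add \<Rightarrow> 'v"
    and B :: "'v set"
    and f :: "'v \<Rightarrow> 'v \<Rightarrow> 'k"
    and d :: "'v \<Rightarrow> 'v"
  assumes fin: "finite_dimensional_vector_space scale B"
    and f_lin: "\<And>x. Vector_Spaces.linear scale (*) (f x)"
    and f_sym: "\<And>x y. f x y = f y x"
    and f_nondeg: "\<And>x. (\<forall>y. f x y = 0) \<Longrightarrow> x = 0"
    and d_lin: "Vector_Spaces.linear scale scale d"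
    and d_skew: "\<And>x y. f (d x) y + f x (d y) = 0"
  shows "dext_two_step_nilpotent scale f d \<longleftrightarrow> d \<noteq> (\<lambda>_. 0) \<and> d \<circ> d = (\<lambda>_. 0)"
proof -
  interpret skew_derivation scale f d
    using fin f_lin f_sym d_lin d_skew
    by (simp add: skew_derivation_def skew_derivation_axioms_def finite_dimensional_vector_space_def)
  show ?thesis
    using derived_eq_zero_iff second_derived_eq_zero_iff
    by (auto simp: dext_two_step_nilpotent_def zero_prod_def)
qed

end
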